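(* Let $n\ge 2$. The nonnegative orthant $\mathbb{Z}_{\ge 0}^{n-1}$ is the disjoint union \[\mathbb{Z}_{\ge0}^{n-1}=\bigsqcup_{b\in\mathsf{BIAS}_n}\mathcal{C}^n_b,\qquad \mathcal{C}^n_b:=\{(t_1,2t_2,\dots,(n-1)t_{n-1})+\dot g(b): t\in\mathbb{Z}_{\ge0}^{n-1}\}.\] Moreover, for $w\in\widetilde{S}_n^\circ$, the gap vector $\dot g(w)$ lies in $\mathcal{C}^n_b$ where $b$ is the bias of $w$.
   Context: An affine permutation of size $n$ is a bijection $w:\mathbb{Z}\to\mathbb{Z}$ with $w(i+n)=w(i)+n$ for all $i$ and $w(1)+\cdots+w(n)=\binom{n+1}{2}$, with base window $[w_1,\dots,w_n]=[w(1),\dots,w(n)]$. $\widetilde{S}_n^\circ$ is the set of such $w$ with $w_1<\cdots<w_n$. For $w\in\widetilde{S}_n^\circ$, an integer is a bead if it equals $w_j-mn$ for some $1\le j\le n$ and integer $m\ge0$, and a gap otherwise; the gap vector is $\dot g(w)=(g_1,\dots,g_{n-1})$ with $g_i$ the number of gaps strictly between $w_i$ and $w_{i+1}$. $\mathsf{BIAS}_n$ is the set of $w\in\widetilde{S}_n^\circ$ with $w_{i+1}-w_i\in\{1,\dots,n-1\}$ for all $i$. The bias of $w\in\widetilde{S}_n^\circ$ is the unique $b\in\mathsf{BIAS}_n$ with $b_{i+1}-b_i\equiv w_{i+1}-w_i \pmod n$ for all $i$. *)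

theory Defs
  imports Main
begin

definition affine_perm :: "nat \<Rightarrow> (int \<Rightarrow> int) \<Rightarrow> bool" where
  "affine_perm n w \<longleftrightarrow> bij w \<and> (\<forall>i. w (i + int n) = w i + int n)
     \<and> (\<Sum>i=1..int n. w i) = int ((n + 1) choose 2)"

definition Scirc :: "nat \<Rightarrow> (int \<Rightarrow> int) set" where
  "Scirc n = {w. affine_perm n w \<and> (\<forall>i. 1 \<le> i \<and> i < int n \<longrightarrow> w i < w (i + 1))}"

definition bead :: "nat \<Rightarrow> (int \<Rightarrow> int) \<Rightarrow> int \<Rightarrow> bool" where
  "bead n w x \<longleftrightarrow> (\<exists>j m. 1 \<le> j \<and> j \<le> int n \<and> 0 \<le> m \<and> x = w j - m * int n)"

definition gapvec :: "nat \<Rightarrow> (int \<Rightarrow> int) \<Rightarrow> nat list" where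
  "gapvec n w = map (\<lambda>i. card {x. w (int i) < x \<and> x < w (int i + 1) \<and> \<not> bead n w x}) [1..<n]"

definition BIAS :: "nat \<Rightarrow> (int \<Rightarrow> int) set" where
  "BIAS n = {w \<in> Scirc n. \<forall>i. 1 \<le> i \<and> i < int n \<longrightarrow>
              w (i + 1) - w i \<in> {1 .. int n - 1}}"

definition bias :: "nat \<Rightarrow> (int \<Rightarrow> int) \<Rightarrow> (int \<Rightarrow> int)" where
  "bias n w = (THE b. b \<in> BIAS n \<and> (\<forall>i. 1 \<le> i \<and> i < int n \<longrightarrow>
       (b (i + 1) - b i) mod int n = (w (i + 1) - w i) mod int n))"

definition cone :: "nat \<Rightarrow> (int \<Rightarrow> int) \<Rightarrow> nat list set" where
  "cone n b = {v. \<exists>t. length t = n - 1 \<and>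
       v = map (\<lambda>i. i * t ! (i - 1) + gapvec n b ! (i - 1)) [1..<n]}"

end

theory Submission
  imports Defs "HOL-Combinatorics.Multiset_Permutations"
begin

text \<open>A gap strictly between \<open>w i\<close> and \<open>w (i + 1)\<close> is an integer congruent modulo \<open>n\<close> to one
  of \<open>w 1, \<dots>, w i\<close>. For a bias \<open>b\<close> the step \<open>b (i + 1) - b i\<close> is less than \<open>n\<close>, so \<open>g_i(b)\<close>
  counts the \<open>j < i\<close> whose residue lies on the cyclic arc from \<open>b i\<close> to \<open>b (i + 1)\<close>; in
  particular \<open>g_i(b) < i\<close>. Read backwards, these counts insert \<open>b (i + 1)\<close> into the cyclic order of
  the residues of \<open>b 1, \<dots>, b i\<close>, so they determine that order and hence \<open>b\<close>: the gap vector
  embeds \<open>BIAS_n\<close> into the \<open>(n - 1)!\<close> vectors with \<open>g_i < i\<close>. Every arrangement of the residues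
  is realised by a bias, so this embedding is a bijection, and the reductions \<open>v_i mod i\<close> of a
  vector \<open>v\<close> single out the unique \<open>b\<close> with \<open>v \<in> C_b\<close>. For general \<open>w\<close> with bias \<open>b\<close> write
  \<open>w (i + 1) - w i = t_i n + (b (i + 1) - b i)\<close>: each of the \<open>t_i\<close> extra periods adds one gap
  per residue of \<open>w 1, \<dots>, w i\<close>, so \<open>g_i(w) = i t_i + g_i(b)\<close>.\<close>

section \<open>Residues and quasi-periodic functions\<close>

lemma eq_if_mod_eq_and_dist_less:
  fixes x y N :: int
  assumes "x mod N = y mod N" "\<bar>x - y\<bar> < N"
  shows "x = y"
proof (rule ccontr)
  assume "x \<noteq> y"
  have "N dvd x - y" using assms(1) by (simp add: mod_eq_dvd_iff)
  then have "\<bar>N\<bar> \<le> \<bar>x - y\<bar>" using \<open>x \<noteq> y\<close> by (intro dvd_imp_le_int) auto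
  then show False using assms(2) by linarith
qed

lemma shift_by_multiple:
  fixes f :: "int \<Rightarrow> int"
  assumes "\<And>i. f (i + N) = f i + N"
  shows "f (i + k * N) = f i + k * N"
proof (induction k rule: int_induct[where k = 0])
  case (step1 k)
  have "f (i + (k + 1) * N) = f ((i + k * N) + N)" by (simp add: algebra_simps)
  also have "\<dots> = f (i + k * N) + N" by (rule assms)
  finally show ?case using step1 by (simp add: algebra_simps)
next
  case (step2 k)
  have "f (i + k * N) = f ((i + (k - 1) * N) + N)" by (simp add: algebra_simps)
  also have "\<dots> = f (i + (k - 1) * N) + N" by (rule assms)
  finally show ?case using step2 by (simp add: algebra_simps)
qed simp

lemma window_decomp:
  fixes z N :: int
  assumes "N > 0"
  shows "z = ((z - 1) mod N + 1) + (z - 1) div N * N" and "(z - 1) mod N + 1 \<in> {1..N}"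
proof -
  show "z = ((z - 1) mod N + 1) + (z - 1) div N * N" using div_mult_mod_eq[of "z - 1" N] by linarith
  have "0 \<le> (z - 1) mod N" "(z - 1) mod N < N" using assms by simp_all
  then show "(z - 1) mod N + 1 \<in> {1..N}" by simp
qed

lemma residues_image:
  assumes "n > 0" "inj_on (\<lambda>j. f j mod int n) {1..int n}"
  shows "(\<lambda>j. f j mod int n) ` {1..int n} = {0..<int n}"
proof (rule card_subset_eq)
  show "(\<lambda>j. f j mod int n) ` {1..int n} \<subseteq> {0..<int n}" using assms(1) by auto
  show "card ((\<lambda>j. f j mod int n) ` {1..int n}) = card {0..<int n}"
    using card_image[OF assms(2)] by simp
qed simp

lemma window_residues_inj: "inj_on (\<lambda>j. j mod int n) {1..int n}"
  by (rule inj_onI) (auto intro: eq_if_mod_eq_and_dist_less)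

lemma bij_if_quasi_periodic:
  fixes f :: "int \<Rightarrow> int"
  assumes "n > 0" "\<And>i. f (i + int n) = f i + int n"
    and inj: "inj_on (\<lambda>j. f j mod int n) {1..int n}"
  shows "bij f"
proof (rule bijI)
  have N: "int n > 0" using assms(1) by simp
  note shift = shift_by_multiple[of f "int n", OF assms(2)]
  show "inj f"
  proof (rule injI)
    fix x y assume xy: "f x = f y"
    define j where "j z = (z - 1) mod int n + 1" for z
    define q where "q z = (z - 1) div int n" for z
    have decomp: "z = j z + q z * int n" "j z \<in> {1..int n}" for z
      using window_decomp[OF N] unfolding j_def q_def by auto
    have "f (j x) + q x * int n = f (j y) + q y * int n"
      using xy shift decomp(1)[of x] decomp(1)[of y] by metis
    then have "f (j x) mod int n = f (j y) mod int n"
      by (metis mod_mult_self1)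
    then have "j x = j y" using inj decomp(2) by (auto dest: inj_onD)
    then show "x = y"
      using \<open>f (j x) + q x * int n = f (j y) + q y * int n\<close> decomp(1)[of x] decomp(1)[of y] assms(1)
      by simp
  qed
  show "surj f"
    unfolding surj_def
  proof
    fix y
    have "y mod int n \<in> (\<lambda>j. f j mod int n) ` {1..int n}"
      using residues_image[OF assms(1) inj] N by simp
    then obtain j where "f j mod int n = y mod int n" by auto
    then obtain q where "y - f j = int n * q" by (metis dvdE mod_eq_dvd_iff)
    then have "y = f (j + q * int n)" using shift[of j q] by (simp add: algebra_simps)
    then show "\<exists>x. y = f x" ..
  qed
qed

section \<open>Affine permutations\<close>

lemma affine_perm_shift:
  assumes "affine_perm n w"
  shows "w (i + k * int n) = w i + k * int n"
  using assms shift_by_multiple[of w "int n"] unfolding affine_perm_def by blast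

lemma affine_perm_residues_inj:
  assumes "affine_perm n w"
  shows "inj_on (\<lambda>j. w j mod int n) {1..int n}"
proof (rule inj_onI)
  fix j k assume jk: "j \<in> {1..int n}" "k \<in> {1..int n}" "w j mod int n = w k mod int n"
  then obtain q where "w j - w k = int n * q" by (metis dvdE mod_eq_dvd_iff)
  then have "w j = w (k + q * int n)" using affine_perm_shift[OF assms] by (simp add: algebra_simps)
  moreover have "inj w" using assms unfolding affine_perm_def bij_def by blast
  ultimately have "j = k + q * int n" by (simp add: inj_eq)
  then have "j mod int n = k mod int n" by simp
  then show "j = k" using jk(1,2) by (auto intro: eq_if_mod_eq_and_dist_less)
qed

lemma affine_perm_eqI:
  assumes "affine_perm n w" "affine_perm n w'" "n > 0" "\<And>k. k \<in> {1..int n} \<Longrightarrow> w k = w' k"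
  shows "w = w'"
proof
  fix z
  have N: "int n > 0" using assms(3) by simp
  note decomp = window_decomp[OF N, of z]
  have "w z = w ((z - 1) mod int n + 1) + (z - 1) div int n * int n"
    using affine_perm_shift[OF assms(1)] decomp(1) by metis
  also have "\<dots> = w' ((z - 1) mod int n + 1) + (z - 1) div int n * int n"
    using assms(4) decomp(2) by simp
  also have "\<dots> = w' z"
    using affine_perm_shift[OF assms(2)] decomp(1) by metis
  finally show "w z = w' z" .
qed

text \<open>Equal steps make \<open>w'\<close> a translate of \<open>w\<close>; the normalisation of the window sum rules
  out a nonzero translation.\<close>
lemma affine_perm_eq_if_steps_eq:
  assumes "affine_perm n w" "affine_perm n w'" "n > 0"
    and steps: "\<And>i. 1 \<le> i \<Longrightarrow> i < int n \<Longrightarrow> w (i + 1) - w i = w' (i + 1) - w' i"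
  shows "w = w'"
proof -
  define c where "c = w' 1 - w 1"
  have translate: "w' k = w k + c" if "1 \<le> k" "k \<le> int n" for k
    using that
  proof (induction k rule: int_ge_induct)
    case (step k)
    then show ?case using steps[of k] by simp
  qed (simp add: c_def)
  have "(\<Sum>k=1..int n. w' k) = (\<Sum>k=1..int n. w k + c)" by (rule sum.cong) (auto simp: translate)
  also have "\<dots> = (\<Sum>k=1..int n. w k) + int n * c" by (simp add: sum.distrib)
  finally have "c = 0" using assms(1-3) by (simp add: affine_perm_def)
  then show ?thesis using affine_perm_eqI[OF assms(1-3)] translate by simp
qed

lemma Scirc_affine_perm: "w \<in> Scirc n \<Longrightarrow> affine_perm n w"
  by (simp add: Scirc_def)

lemma Scirc_less:
  assumes "w \<in> Scirc n" "1 \<le> j" "j < k" "k \<le> int n"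
  shows "w j < w k"
proof -
  have "k \<le> int n \<longrightarrow> w j < w k" using \<open>j < k\<close>
  proof (induction k rule: int_gr_induct)
    case base
    then show ?case using assms(1,2) by (simp add: Scirc_def)
  next
    case (step k)
    show ?case
    proof
      assume "k + 1 \<le> int n"
      then have "w k < w (k + 1)" using step assms(1,2) by (simp add: Scirc_def)
      then show "w j < w (k + 1)" using step \<open>k + 1 \<le> int n\<close> by simp
    qed
  qed
  then show ?thesis using assms(4) by simp
qed

lemma gapvec_nth:
  assumes "1 \<le> i" "i < n"
  shows "gapvec n w ! (i - 1) = card {x. w (int i) < x \<and> x < w (int i + 1) \<and> \<not> bead n w x}"
proof -
  have "[1..<n] ! (i - 1) = i" using assms by simp
  then show ?thesis using assms by (simp add: gapvec_def)
qed

lemma length_gapvec: "length (gapvec n w) = n - 1"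
  by (simp add: gapvec_def)

text \<open>Between \<open>w i\<close> and \<open>w (i + 1)\<close> the beads are exactly the integers congruent to some
  \<open>w j\<close> with \<open>j > i\<close>, since these lie below \<open>w j\<close>.\<close>
lemma not_bead_iff_residue:
  assumes w: "w \<in> Scirc n" and i: "1 \<le> i" "i < int n" and x: "w i < x" "x < w (i + 1)"
  shows "\<not> bead n w x \<longleftrightarrow> x mod int n \<in> (\<lambda>j. w j mod int n) ` {1..i}"
proof
  have inj: "inj_on (\<lambda>j. w j mod int n) {1..int n}"
    using affine_perm_residues_inj[OF Scirc_affine_perm[OF w]] .
  assume "\<not> bead n w x"
  have "x mod int n \<in> (\<lambda>j. w j mod int n) ` {1..int n}"
    using residues_image[OF _ inj] i by simp
  then obtain j where j: "j \<in> {1..int n}" "w j mod int n = x mod int n" by auto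
  have "j \<le> i"
  proof (rule ccontr)
    assume "\<not> j \<le> i"
    then have "x < w j" using x(2) Scirc_less[OF w, of "i + 1" j] j(1) i
      by (cases "j = i + 1") auto
    moreover obtain m where m: "w j - x = int n * m" using j(2) by (metis dvdE mod_eq_dvd_iff)
    ultimately have "0 < int n * m" by simp
    then have "0 \<le> m" by (simp add: zero_less_mult_iff)
    then have "bead n w x" unfolding bead_def using j(1) m by (auto simp: algebra_simps)
    with \<open>\<not> bead n w x\<close> show False ..
  qed
  then show "x mod int n \<in> (\<lambda>j. w j mod int n) ` {1..i}" using j by force
next
  assume "x mod int n \<in> (\<lambda>j. w j mod int n) ` {1..i}"
  then obtain j where j: "j \<in> {1..i}" "x mod int n = w j mod int n" by auto
  show "\<not> bead n w x"
  proof
    assume "bead n w x"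
    then obtain k m where km: "k \<in> {1..int n}" "0 \<le> m" "x = w k - m * int n"
      unfolding bead_def by auto
    then have "x mod int n = w k mod int n" by (simp add: mod_diff_right_eq[symmetric])
    then have "w k mod int n = w j mod int n" using j(2) by simp
    then have "k = j"
      using affine_perm_residues_inj[OF Scirc_affine_perm[OF w]] km(1) j(1) i by (auto dest: inj_onD)
    have "w j \<le> w i" using j(1) i Scirc_less[OF w, of j i] by (cases "j = i") auto
    moreover have "0 \<le> m * int n" using km(2) by simp
    ultimately have "x \<le> w i" using km(3) \<open>k = j\<close> by simp
    then show False using x(1) by simp
  qed
qed

lemma gapvec_nth_Scirc:
  assumes "w \<in> Scirc n" "1 \<le> i" "i < n"
  shows "gapvec n w ! (i - 1) = card {x. w (int i) < x \<and> x < w (int i + 1) \<and>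
            x mod int n \<in> (\<lambda>j. w j mod int n) ` {1..int i}}"
  unfolding gapvec_nth[OF assms(2,3)]
  using not_bead_iff_residue[OF assms(1), of "int i"] assms(2,3) by (intro arg_cong[where f = card]) auto

section \<open>Counting residues in intervals\<close>

lemma card_Collect_shift:
  fixes d :: int
  shows "card {x. P x} = card {x. P (x + d)}"
proof -
  have "{x. P x} = (\<lambda>x. x + d) ` {x. P (x + d)}"
    by (auto simp: image_iff intro!: exI[of _ "_ - d"])
  then show ?thesis by (simp add: card_image)
qed

lemma card_residues_in_period:
  fixes N a :: int
  assumes "N > 0" "R \<subseteq> {0..<N}"
  shows "card {x. a < x \<and> x \<le> a + N \<and> x mod N \<in> R} = card R"
proof -
  have "bij_betw (\<lambda>x. x mod N) {x. a < x \<and> x \<le> a + N \<and> x mod N \<in> R} R"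
  proof (rule bij_betw_imageI)
    show "inj_on (\<lambda>x. x mod N) {x. a < x \<and> x \<le> a + N \<and> x mod N \<in> R}"
      by (rule inj_onI) (auto intro: eq_if_mod_eq_and_dist_less)
    show "(\<lambda>x. x mod N) ` {x. a < x \<and> x \<le> a + N \<and> x mod N \<in> R} = R"
    proof (intro equalityI subsetI)
      fix v assume v: "v \<in> R"
      define x where "x = a + 1 + (v - a - 1) mod N"
      have "x mod N = (a + 1 + (v - a - 1)) mod N" unfolding x_def by (simp add: mod_add_right_eq)
      also have "\<dots> = v" using v assms(2) by auto
      finally have "x mod N = v" .
      moreover have "a < x" "x \<le> a + N"
        unfolding x_def using assms(1) pos_mod_bound[of N "v - a - 1"] pos_mod_sign[of N "v - a - 1"]
        by linarith+
      ultimately show "v \<in> (\<lambda>x. x mod N) ` {x. a < x \<and> x \<le> a + N \<and> x mod N \<in> R}"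
        using v by (auto intro!: image_eqI[of _ _ x])
    qed auto
  qed
  then show ?thesis by (simp add: bij_betw_same_card)
qed

lemma card_residues_in_interval:
  fixes N a r :: int
  assumes "N > 0" "R \<subseteq> {0..<N}" "r \<ge> 1"
  shows "card {x. a < x \<and> x < a + int t * N + r \<and> x mod N \<in> R}
       = t * card R + card {x. a < x \<and> x < a + r \<and> x mod N \<in> R}"
proof (induction t arbitrary: a)
  case (Suc t)
  let ?first = "{x. a < x \<and> x \<le> a + N \<and> x mod N \<in> R}"
  let ?rest = "{x. a + N < x \<and> x < (a + N) + int t * N + r \<and> x mod N \<in> R}"
  have "{x. a < x \<and> x < a + int (Suc t) * N + r \<and> x mod N \<in> R} = ?first \<union> ?rest"
    using assms(1,3) by (auto simp: distrib_right) (smt (verit) mult_nonneg_nonneg of_nat_0_le_iff)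
  moreover have "finite ?first" "finite ?rest"
    by (auto intro: finite_subset[of _ "{a<..a + N}"] finite_subset[of _ "{a + N<..<a + N + int t * N + r}"])
  moreover have "?first \<inter> ?rest = {}" by auto
  ultimately have "card {x. a < x \<and> x < a + int (Suc t) * N + r \<and> x mod N \<in> R}
      = card ?first + card ?rest"
    by (simp add: card_Un_disjoint)
  also have "\<dots> = card R + (t * card R + card {x. a + N < x \<and> x < a + N + r \<and> x mod N \<in> R})"
    using card_residues_in_period[OF assms(1,2)] Suc.IH by simp
  also have "card {x. a + N < x \<and> x < a + N + r \<and> x mod N \<in> R}
      = card {x. a < x \<and> x < a + r \<and> x mod N \<in> R}"
    using card_Collect_shift[of "\<lambda>x. a + N < x \<and> x < a + N + r \<and> x mod N \<in> R" N]
    by (simp add: algebra_simps)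
  finally show ?case by simp
qed simp

section \<open>Gaps of biases\<close>

definition cyc_offset :: "nat \<Rightarrow> (int \<Rightarrow> int) \<Rightarrow> int \<Rightarrow> int \<Rightarrow> int" where
  "cyc_offset n b i j = (b j - b i) mod int n"

definition cyc_between :: "nat \<Rightarrow> (int \<Rightarrow> int) \<Rightarrow> int \<Rightarrow> int set" where
  "cyc_between n b i = {j \<in> {1..i}. cyc_offset n b i j < cyc_offset n b i (i + 1)}"

lemma cyc_offset_inj:
  assumes "affine_perm n b"
  shows "inj_on (cyc_offset n b i) {1..int n}"
proof (rule inj_onI)
  fix j k assume jk: "j \<in> {1..int n}" "k \<in> {1..int n}" "cyc_offset n b i j = cyc_offset n b i k"
  then have "b j mod int n = b k mod int n"
    unfolding cyc_offset_def by (simp add: mod_eq_dvd_iff)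
  then show "j = k" using affine_perm_residues_inj[OF assms] jk(1,2) by (auto dest: inj_onD)
qed

lemma BIAS_step:
  assumes "b \<in> BIAS n" "1 \<le> i" "i < int n"
  shows "1 \<le> b (i + 1) - b i" and "b (i + 1) - b i < int n"
  using assms by (auto simp: BIAS_def)

lemma cyc_offset_step_BIAS:
  assumes "b \<in> BIAS n" "1 \<le> i" "i < int n"
  shows "cyc_offset n b i (i + 1) = b (i + 1) - b i"
  using BIAS_step[OF assms] by (simp add: cyc_offset_def)

lemma BIAS_Scirc: "b \<in> BIAS n \<Longrightarrow> b \<in> Scirc n"
  by (simp add: BIAS_def)

lemma bij_betw_cyc_between_gaps:
  assumes b: "b \<in> BIAS n" and i: "1 \<le> i" "i < int n"
  shows "bij_betw (\<lambda>j. b i + cyc_offset n b i j) (cyc_between n b i - {i})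
    {x. b i < x \<and> x < b (i + 1) \<and> x mod int n \<in> (\<lambda>j. b j mod int n) ` {1..i}}"
proof (rule bij_betw_imageI)
  have step: "cyc_offset n b i (i + 1) = b (i + 1) - b i"
    using cyc_offset_step_BIAS[OF b i] .
  have inj: "inj_on (cyc_offset n b i) {1..int n}"
    using cyc_offset_inj[OF Scirc_affine_perm[OF BIAS_Scirc[OF b]]] .
  have "cyc_between n b i - {i} \<subseteq> {1..int n}" using i by (auto simp: cyc_between_def)
  then show "inj_on (\<lambda>j. b i + cyc_offset n b i j) (cyc_between n b i - {i})"
    using inj_on_subset[OF inj] by (simp add: inj_on_def)
  show "(\<lambda>j. b i + cyc_offset n b i j) ` (cyc_between n b i - {i}) =
    {x. b i < x \<and> x < b (i + 1) \<and> x mod int n \<in> (\<lambda>j. b j mod int n) ` {1..i}}"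
  proof (intro equalityI subsetI)
    fix x assume "x \<in> {x. b i < x \<and> x < b (i + 1) \<and> x mod int n \<in> (\<lambda>j. b j mod int n) ` {1..i}}"
    then obtain j where x: "b i < x" "x < b (i + 1)" "j \<in> {1..i}" "x mod int n = b j mod int n"
      by auto
    have "cyc_offset n b i j = (x - b i) mod int n"
      unfolding cyc_offset_def by (rule mod_diff_cong[OF x(4)[symmetric] refl])
    also have "\<dots> = x - b i" using x(1,2) BIAS_step[OF b i] by simp
    finally have offset: "cyc_offset n b i j = x - b i" .
    then have "x = b i + cyc_offset n b i j" by simp
    moreover have "j \<noteq> i" using offset x(1) by (auto simp: cyc_offset_def)
    then have "j \<in> cyc_between n b i - {i}"
      using x offset step by (simp add: cyc_between_def)
    ultimately show "x \<in> (\<lambda>j. b i + cyc_offset n b i j) ` (cyc_between n b i - {i})" by blast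
  next
    fix x assume "x \<in> (\<lambda>j. b i + cyc_offset n b i j) ` (cyc_between n b i - {i})"
    then obtain j where j: "j \<in> {1..i}" "j \<noteq> i" "cyc_offset n b i j < b (i + 1) - b i"
      and x: "x = b i + cyc_offset n b i j"
      using step by (auto simp: cyc_between_def)
    have "cyc_offset n b i j \<noteq> cyc_offset n b i i"
      using inj j(1,2) i by (auto dest: inj_onD)
    moreover have "0 \<le> cyc_offset n b i j" using i by (simp add: cyc_offset_def)
    ultimately have pos: "0 < cyc_offset n b i j" by (simp add: cyc_offset_def)
    have "x mod int n = b j mod int n"
      unfolding x cyc_offset_def by (simp add: mod_add_right_eq)
    then have "x mod int n \<in> (\<lambda>j. b j mod int n) ` {1..i}" using j(1) by force
    then show "x \<in> {x. b i < x \<and> x < b (i + 1) \<and> x mod int n \<in> (\<lambda>j. b j mod int n) ` {1..i}}"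
      using x j(3) pos by simp
  qed
qed

lemma gapvec_nth_BIAS:
  assumes b: "b \<in> BIAS n" and i: "1 \<le> i" "i < n"
  shows "Suc (gapvec n b ! (i - 1)) = card (cyc_between n b (int i))"
proof -
  have gap: "gapvec n b ! (i - 1) = card (cyc_between n b (int i) - {int i})"
    using gapvec_nth_Scirc[OF BIAS_Scirc[OF b] i] bij_betw_cyc_between_gaps[OF b, of "int i"] i
    by (simp add: bij_betw_same_card)
  have "int i \<in> cyc_between n b (int i)"
    using cyc_offset_step_BIAS[OF b, of "int i"] BIAS_step[OF b, of "int i"] i
    by (simp add: cyc_between_def cyc_offset_def)
  moreover have "finite (cyc_between n b (int i))"
    by (rule finite_subset[of _ "{1..int i}"]) (auto simp: cyc_between_def)
  ultimately show ?thesis unfolding gap by (rule card_Suc_Diff1[rotated])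
qed

lemma gapvec_nth_BIAS_less:
  assumes "b \<in> BIAS n" "1 \<le> i" "i < n"
  shows "gapvec n b ! (i - 1) < i"
proof -
  have "card (cyc_between n b (int i)) \<le> card {1..int i}"
    by (intro card_mono) (auto simp: cyc_between_def)
  then show ?thesis using gapvec_nth_BIAS[OF assms] by simp
qed

definition lehmer_codes :: "nat \<Rightarrow> nat list set" where
  "lehmer_codes m = {v. length v = m \<and> (\<forall>k<m. v ! k \<le> k)}"

lemma lehmer_codes_Suc: "lehmer_codes (Suc m) = (\<lambda>(v, x). v @ [x]) ` (lehmer_codes m \<times> {0..m})"
proof (intro equalityI subsetI)
  fix v assume v: "v \<in> lehmer_codes (Suc m)"
  then have "v \<noteq> []" "length v = Suc m" by (auto simp: lehmer_codes_def)
  then have "v = butlast v @ [last v]" and "last v = v ! m" by (simp, simp add: last_conv_nth)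
  moreover have "butlast v \<in> lehmer_codes m" using v by (auto simp: lehmer_codes_def nth_butlast)
  ultimately show "v \<in> (\<lambda>(v, x). v @ [x]) ` (lehmer_codes m \<times> {0..m})"
    using v by (auto simp: lehmer_codes_def intro!: image_eqI[of _ _ "(butlast v, last v)"])
qed (auto simp: lehmer_codes_def nth_append less_Suc_eq)

lemma finite_lehmer_codes: "finite (lehmer_codes m)"
proof (induction m)
  case 0
  have "lehmer_codes 0 = {[]}" by (auto simp: lehmer_codes_def)
  then show ?case by simp
qed (simp add: lehmer_codes_Suc)

lemma card_lehmer_codes: "card (lehmer_codes m) = fact m"
proof (induction m)
  case 0
  have "lehmer_codes 0 = {[]}" by (auto simp: lehmer_codes_def)
  then show ?case by simp
next
  case (Suc m)
  have "inj_on (\<lambda>(v, x). v @ [x]) (lehmer_codes m \<times> {0..m})" by (auto intro: inj_onI)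
  then have "card (lehmer_codes (Suc m)) = card (lehmer_codes m) * Suc m"
    unfolding lehmer_codes_Suc by (simp add: card_image card_cartesian_product)
  then show ?case using Suc by (simp add: algebra_simps)
qed

lemma gapvec_BIAS_in_lehmer_codes:
  assumes "b \<in> BIAS n"
  shows "gapvec n b \<in> lehmer_codes (n - 1)"
proof -
  have "gapvec n b ! k \<le> k" if "k < n - 1" for k
  proof -
    have "Suc k < n" using that by simp
    then show ?thesis using gapvec_nth_BIAS_less[OF assms, of "Suc k"] by simp
  qed
  then show ?thesis by (simp add: lehmer_codes_def length_gapvec)
qed

section \<open>The gap vector determines the bias\<close>

text \<open>The cyclic order of residues seen from \<open>x\<close>, in terms of the cyclic order seen from \<open>p\<close>:
  cutting the circle at \<open>x\<close> instead of \<open>p\<close> moves the residues before \<open>x\<close> to the end.\<close>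
lemma mod_diff_less_rebase:
  fixes x y z p N :: int
  assumes "N > 0"
  shows "(y - x) mod N < (z - x) mod N \<longleftrightarrow>
    (if (x - p) mod N \<le> (y - p) mod N
     then (x - p) mod N \<le> (z - p) mod N \<longrightarrow> (y - p) mod N < (z - p) mod N
     else \<not> (x - p) mod N \<le> (z - p) mod N \<and> (y - p) mod N < (z - p) mod N)"
proof -
  define X Y Z where "X = (x - p) mod N" and "Y = (y - p) mod N" and "Z = (z - p) mod N"
  have range: "0 \<le> X" "X < N" "0 \<le> Y" "Y < N" "0 \<le> Z" "Z < N"
    using assms unfolding X_def Y_def Z_def by simp_all
  have rebase: "(v - x) mod N = (if X \<le> V then V - X else V - X + N)"
    if "V = (v - p) mod N" "0 \<le> V" "V < N" for v V
  proof -
    have "(v - x) mod N = ((v - p) - (x - p)) mod N" by simp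
    also have "\<dots> = (V - X) mod N" unfolding X_def that(1) by (simp add: mod_diff_eq)
    finally have "(v - x) mod N = (V - X) mod N" .
    moreover have "(V - X) mod N = V - X" if "X \<le> V"
      using that range \<open>V < N\<close> by (intro mod_pos_pos_trivial) auto
    moreover have "(V - X) mod N = V - X + N" if "\<not> X \<le> V"
    proof -
      have "(V - X) mod N = (V - X + N) mod N" by simp
      also have "\<dots> = V - X + N" using that range \<open>0 \<le> V\<close> by (intro mod_pos_pos_trivial) auto
      finally show ?thesis .
    qed
    ultimately show ?thesis by simp
  qed
  show ?thesis
    unfolding rebase[OF Y_def range(3,4)] rebase[OF Z_def range(5,6)]
    unfolding X_def[symmetric] Y_def[symmetric] Z_def[symmetric] using range by auto
qed

lemma downsets_eq_if_card_eq:
  fixes f g :: "'a \<Rightarrow> 'b :: linorder"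
  assumes "finite A" "\<And>j k. j \<in> A \<Longrightarrow> k \<in> A \<Longrightarrow> f j < f k \<longleftrightarrow> g j < g k"
    and "card {j\<in>A. f j < X} = card {j\<in>A. g j < Y}"
  shows "{j\<in>A. f j < X} = {j\<in>A. g j < Y}"
proof -
  have "{j\<in>A. f j < X} \<subseteq> {j\<in>A. g j < Y} \<or> {j\<in>A. g j < Y} \<subseteq> {j\<in>A. f j < X}"
  proof (rule ccontr)
    assume "\<not> ?thesis"
    then obtain j k where j: "j \<in> A" "f j < X" "\<not> g j < Y" and k: "k \<in> A" "g k < Y" "\<not> f k < X"
      by auto
    then have "f j < f k" by simp
    then have "g j < g k" using assms(2) j(1) k(1) by blast
    then show False using j k by simp
  qed
  then show ?thesis
    using assms(1,3) by (metis (no_types, lifting) card_subset_eq finite_subset mem_Collect_eq subsetI)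
qed

lemma card_less_eq_value:
  fixes f :: "'a \<Rightarrow> int"
  assumes "inj_on f A" "f ` A = {0..<N}" "k \<in> A"
  shows "card {j\<in>A. f j < f k} = nat (f k)"
proof -
  have "f ` {j\<in>A. f j < f k} = {0..<f k}"
  proof (intro equalityI subsetI)
    fix v assume "v \<in> {0..<f k}"
    moreover have "f k < N" using assms(2,3) by auto
    ultimately have "v \<in> f ` A" using assms(2) by simp
    then show "v \<in> f ` {j\<in>A. f j < f k}" using \<open>v \<in> {0..<f k}\<close> by auto
  qed (use assms(2) in auto)
  then have "card {0..<f k} = card {j\<in>A. f j < f k}"
    using card_image[OF inj_on_subset[OF assms(1)]] by (metis (no_types, lifting) mem_Collect_eq subsetI)
  then show ?thesis by simp
qed

definition same_cyc_order :: "nat \<Rightarrow> (int \<Rightarrow> int) \<Rightarrow> (int \<Rightarrow> int) \<Rightarrow> int \<Rightarrow> bool" where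
  "same_cyc_order n b b' i \<longleftrightarrow> (\<forall>j\<in>{1..i}. \<forall>k\<in>{1..i}.
     cyc_offset n b i j < cyc_offset n b i k \<longleftrightarrow> cyc_offset n b' i j < cyc_offset n b' i k)"

text \<open>The sets \<open>cyc_between\<close> are down-sets of the common cyclic order, so equal cardinalities
  make them equal; this places \<open>i + 1\<close> in the cyclic order of \<open>1, \<dots>, i\<close>.\<close>
lemma same_cyc_order_step:
  assumes b: "affine_perm n b" and b': "affine_perm n b'" and i: "1 \<le> i" "i < int n"
    and order: "same_cyc_order n b b' i"
    and card: "card (cyc_between n b i) = card (cyc_between n b' i)"
  shows "same_cyc_order n b b' (i + 1)"
proof -
  let ?O = "\<lambda>c. cyc_offset n c i"
  have order_i: "?O b j < ?O b k \<longleftrightarrow> ?O b' j < ?O b' k" if "j \<in> {1..i}" "k \<in> {1..i}" for j k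
    using order that unfolding same_cyc_order_def by blast
  have "cyc_between n b i = cyc_between n b' i"
    using downsets_eq_if_card_eq[of "{1..i}" "?O b" "?O b'"] order_i card
    unfolding cyc_between_def by simp
  then have new: "?O b j < ?O b (i + 1) \<longleftrightarrow> ?O b' j < ?O b' (i + 1)" if "j \<in> {1..i}" for j
    using that unfolding cyc_between_def by blast
  have distinct: "?O c j \<noteq> ?O c (i + 1)" if "affine_perm n c" "j \<in> {1..i}" for c j
    using cyc_offset_inj[OF that(1), of i] that(2) i by (auto dest: inj_onD)
  have order_Suc: "?O b j < ?O b k \<longleftrightarrow> ?O b' j < ?O b' k" if "j \<in> {1..i + 1}" "k \<in> {1..i + 1}" for j k
  proof -
    have "j \<in> {1..i} \<or> j = i + 1" "k \<in> {1..i} \<or> k = i + 1" using that by auto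
    then consider "j \<in> {1..i}" "k \<in> {1..i}" | "j = i + 1" "k = i + 1" | "j \<in> {1..i}" "k = i + 1"
      | "j = i + 1" "k \<in> {1..i}"
      by blast
    then show ?thesis
    proof cases
      case 4
      then show ?thesis using new[of k] distinct[OF b, of k] distinct[OF b', of k] by auto
    qed (use order_i new in auto)
  qed
  have rebase: "cyc_offset n c (i + 1) j < cyc_offset n c (i + 1) k \<longleftrightarrow>
    (if ?O c (i + 1) \<le> ?O c j then ?O c (i + 1) \<le> ?O c k \<longrightarrow> ?O c j < ?O c k
     else \<not> ?O c (i + 1) \<le> ?O c k \<and> ?O c j < ?O c k)" for c j k
    unfolding cyc_offset_def
    using mod_diff_less_rebase[where x = "c (i + 1)" and y = "c j" and z = "c k" and p = "c i"
        and N = "int n"] i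
    by simp
  show ?thesis
    unfolding same_cyc_order_def
  proof (intro ballI)
    fix j k assume jk: "j \<in> {1..i + 1}" "k \<in> {1..i + 1}"
    have "i + 1 \<in> {1..i + 1}" using i by simp
    then have "?O b (i + 1) \<le> ?O b l \<longleftrightarrow> ?O b' (i + 1) \<le> ?O b' l" if "l \<in> {1..i + 1}" for l
      using order_Suc[OF that] by (simp add: not_less[symmetric])
    then show "cyc_offset n b (i + 1) j < cyc_offset n b (i + 1) k \<longleftrightarrow>
        cyc_offset n b' (i + 1) j < cyc_offset n b' (i + 1) k"
      unfolding rebase using jk order_Suc[OF jk] by simp
  qed
qed

lemma same_cyc_order_if_gapvec_eq:
  assumes b: "b \<in> BIAS n" and b': "b' \<in> BIAS n" and gap: "gapvec n b = gapvec n b'"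
    and i: "1 \<le> i" "i \<le> int n"
  shows "same_cyc_order n b b' i"
  using i
proof (induction i rule: int_ge_induct)
  case base
  then show ?case by (simp add: same_cyc_order_def)
next
  case (step i)
  have i: "1 \<le> nat i" "nat i < n" "int (nat i) = i" using step by auto
  have "card (cyc_between n b i) = Suc (gapvec n b ! (nat i - 1))"
    using gapvec_nth_BIAS[OF b i(1,2), unfolded i(3)] by (rule sym)
  also have "\<dots> = card (cyc_between n b' i)"
    using gapvec_nth_BIAS[OF b' i(1,2), unfolded i(3)] gap by simp
  finally show ?case
    using same_cyc_order_step[OF Scirc_affine_perm[OF BIAS_Scirc[OF b]]
        Scirc_affine_perm[OF BIAS_Scirc[OF b']]] step by simp
qed

lemma cyc_offset_eq_rank:
  assumes "affine_perm n c" "n > 0" "k \<in> {1..int n}"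
  shows "cyc_offset n c i k = int (card {j\<in>{1..int n}. cyc_offset n c i j < cyc_offset n c i k})"
proof -
  have "cyc_offset n c i ` {1..int n} = {0..<int n}"
    using residues_image[OF assms(2), of "\<lambda>j. c j - c i"] cyc_offset_inj[OF assms(1)]
    by (simp add: cyc_offset_def[abs_def])
  moreover have "0 \<le> cyc_offset n c i k" using assms(2) by (simp add: cyc_offset_def)
  ultimately show ?thesis using card_less_eq_value[OF cyc_offset_inj[OF assms(1)] _ assms(3)] by simp
qed

text \<open>With the whole window in the same cyclic order, the offsets from \<open>b n\<close> agree (each is
  its rank), and the steps of a bias are differences of consecutive offsets.\<close>
lemma BIAS_eq_if_gapvec_eq:
  assumes "n > 0" and b: "b \<in> BIAS n" and b': "b' \<in> BIAS n" and gap: "gapvec n b = gapvec n b'"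
  shows "b = b'"
proof -
  let ?O = "\<lambda>c. cyc_offset n c (int n)"
  have ap: "affine_perm n c" if "c \<in> BIAS n" for c
    using Scirc_affine_perm[OF BIAS_Scirc[OF that]] .
  have order: "same_cyc_order n b b' (int n)"
    using same_cyc_order_if_gapvec_eq[OF b b' gap] assms(1) by simp
  have offsets: "?O b k = ?O b' k" if k: "k \<in> {1..int n}" for k
  proof -
    have "?O b j < ?O b k \<longleftrightarrow> ?O b' j < ?O b' k" if "j \<in> {1..int n}" for j
      using order that k unfolding same_cyc_order_def by simp
    then have same: "{j\<in>{1..int n}. ?O b j < ?O b k} = {j\<in>{1..int n}. ?O b' j < ?O b' k}"
      by blast
    have "?O b k = int (card {j\<in>{1..int n}. ?O b j < ?O b k})"
      by (rule cyc_offset_eq_rank[OF ap[OF b] assms(1) k])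
    also have "\<dots> = int (card {j\<in>{1..int n}. ?O b' j < ?O b' k})" unfolding same ..
    also have "\<dots> = ?O b' k"
      by (rule cyc_offset_eq_rank[OF ap[OF b'] assms(1) k, symmetric])
    finally show ?thesis .
  qed
  have step: "c (i + 1) - c i = (?O c (i + 1) - ?O c i) mod int n"
    if "c \<in> BIAS n" "1 \<le> i" "i < int n" for c i
  proof -
    have "(?O c (i + 1) - ?O c i) mod int n = (c (i + 1) - c i) mod int n"
      unfolding cyc_offset_def mod_diff_eq by simp
    then show ?thesis using BIAS_step[OF that] by simp
  qed
  show ?thesis
  proof (rule affine_perm_eq_if_steps_eq[OF ap[OF b] ap[OF b'] assms(1)])
    fix i assume "1 \<le> i" "i < int n"
    then show "b (i + 1) - b i = b' (i + 1) - b' i"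
      using step[OF b] step[OF b'] offsets[of i] offsets[of "i + 1"] by simp
  qed
qed

section \<open>Existence of biases\<close>

lemma cong_diff_if_steps_cong:
  fixes f g :: "int \<Rightarrow> int"
  assumes steps: "\<And>i. 1 \<le> i \<Longrightarrow> i < N \<Longrightarrow> (f (i + 1) - f i) mod N = (g (i + 1) - g i) mod N"
    and j: "j \<in> {1..N}" and k: "k \<in> {1..N}"
  shows "(f k - f j) mod N = (g k - g j) mod N"
proof -
  have from_1: "(f k - f 1) mod N = (g k - g 1) mod N" if "1 \<le> k" "k \<le> N" for k
    using that
  proof (induction k rule: int_ge_induct)
    case (step k)
    have "(f (k + 1) - f 1) mod N = ((f (k + 1) - f k) mod N + (f k - f 1) mod N) mod N"
      by (simp add: mod_add_eq)
    also have "\<dots> = ((g (k + 1) - g k) mod N + (g k - g 1) mod N) mod N"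
      using steps[of k] step by simp
    also have "\<dots> = (g (k + 1) - g 1) mod N"
      by (simp add: mod_add_eq)
    finally show ?case .
  qed simp
  have "(f k - f j) mod N = ((f k - f 1) mod N - (f j - f 1) mod N) mod N"
    unfolding mod_diff_eq by simp
  also have "\<dots> = ((g k - g 1) mod N - (g j - g 1) mod N) mod N"
    using from_1 j k by simp
  also have "\<dots> = (g k - g j) mod N"
    unfolding mod_diff_eq by simp
  finally show ?thesis .
qed

lemma sum_window_mod:
  assumes "n > 0" "inj_on (\<lambda>j. f j mod int n) {1..int n}"
  shows "(\<Sum>k=1..int n. f k) mod int n = int ((n + 1) choose 2) mod int n"
proof -
  have residues_sum: "(\<Sum>k=1..int n. g k) mod int n = (\<Sum>v=0..<int n. v) mod int n"
    if "inj_on (\<lambda>j. g j mod int n) {1..int n}" for g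
  proof -
    have "(\<Sum>k=1..int n. g k) mod int n = (\<Sum>k=1..int n. g k mod int n) mod int n"
      by (simp add: mod_sum_eq)
    also have "(\<Sum>k=1..int n. g k mod int n) = (\<Sum>v=0..<int n. v)"
      using sum.reindex[OF that, of "\<lambda>v. v"] residues_image[OF assms(1) that] by simp
    finally show ?thesis .
  qed
  have "(\<Sum>k=1..int n. k) = int ((n + 1) choose 2)"
    using Sum_Icc_int[of 1 "int n"] assms(1) by (simp add: choose_two zdiv_int algebra_simps)
  then show ?thesis
    using residues_sum[OF assms(2)] residues_sum[OF window_residues_inj] by simp
qed

lemma affine_perm_extend:
  assumes "n > 0" and inj: "inj_on (\<lambda>j. f j mod int n) {1..int n}"
    and sum: "(\<Sum>k=1..int n. f k) = int ((n + 1) choose 2)"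
  obtains w where "affine_perm n w" "\<And>k. k \<in> {1..int n} \<Longrightarrow> w k = f k"
proof
  let ?w = "\<lambda>z. f ((z - 1) mod int n + 1) + (z - 1) div int n * int n"
  show window: "?w k = f k" if "k \<in> {1..int n}" for k
  proof -
    have "(k - 1) mod int n = k - 1" "(k - 1) div int n = 0" using that by auto
    then show ?thesis by simp
  qed
  have shift: "?w (z + int n) = ?w z + int n" for z
  proof -
    have e: "z + int n - 1 = (z - 1) + int n" by simp
    have "(z + int n - 1) mod int n = (z - 1) mod int n"
      "(z + int n - 1) div int n = (z - 1) div int n + 1"
      unfolding e using assms(1) by simp_all
    then show ?thesis by (simp add: algebra_simps)
  qed
  have "inj_on (\<lambda>j. ?w j mod int n) {1..int n}"
    using inj by (rule inj_on_cong[THEN iffD2, rotated]) (simp add: window)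
  then have "bij ?w" by (intro bij_if_quasi_periodic[OF assms(1)] shift)
  moreover have "(\<Sum>k=1..int n. ?w k) = int ((n + 1) choose 2)"
    using sum.cong[OF refl window, of "{1..int n}"] sum by simp
  ultimately show "affine_perm n ?w" unfolding affine_perm_def using shift by blast
qed

text \<open>The partial sums of the reduced steps \<open>(a (i + 1) - a i) mod n\<close> have the residues of \<open>a\<close>
  up to a common shift; a constant correction then normalises the window sum.\<close>
lemma affine_perm_exists_steps:
  assumes "n > 0" and inj: "inj_on (\<lambda>j. a j mod int n) {1..int n}"
  obtains b where "affine_perm n b"
    "\<And>i. 1 \<le> i \<Longrightarrow> i < int n \<Longrightarrow> b (i + 1) - b i = (a (i + 1) - a i) mod int n"
proof -
  define \<delta> where "\<delta> i = (a (i + 1) - a i) mod int n" for i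
  define f where "f k = (\<Sum>m<nat (k - 1). \<delta> (int m + 1))" for k
  have f_step: "f (i + 1) - f i = \<delta> i" if "1 \<le> i" for i
  proof -
    have "nat (i + 1 - 1) = Suc (nat (i - 1))" "int (nat (i - 1)) + 1 = i" using that by auto
    then show ?thesis by (simp add: f_def)
  qed
  have f_cong: "(f k - f j) mod int n = (a k - a j) mod int n"
    if "j \<in> {1..int n}" "k \<in> {1..int n}" for j k
  proof (rule cong_diff_if_steps_cong[OF _ that])
    fix i :: int assume "1 \<le> i"
    then show "(f (i + 1) - f i) mod int n = (a (i + 1) - a i) mod int n"
      using f_step by (simp add: \<delta>_def)
  qed
  have f_inj: "inj_on (\<lambda>j. (f j + s) mod int n) {1..int n}" for s
  proof (rule inj_onI)
    fix j k assume jk: "j \<in> {1..int n}" "k \<in> {1..int n}" "(f j + s) mod int n = (f k + s) mod int n"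
    then have "(f k - f j) mod int n = 0" by (simp add: mod_eq_0_iff_dvd mod_eq_dvd_iff dvd_diff_commute)
    then have "(a k - a j) mod int n = 0" using f_cong[OF jk(1,2)] by simp
    then have "a j mod int n = a k mod int n" by (simp add: mod_eq_0_iff_dvd mod_eq_dvd_iff dvd_diff_commute)
    then show "j = k" using inj jk(1,2) by (auto dest: inj_onD)
  qed
  define S where "S = (\<Sum>k=1..int n. f k)"
  define C where "C = int ((n + 1) choose 2)"
  define s where "s = (C - S) div int n"
  have "C mod int n = S mod int n"
    using sum_window_mod[OF assms(1) f_inj[of 0]] by (simp add: S_def C_def)
  then have "int n dvd C - S" by (simp add: mod_eq_dvd_iff)
  then have "(\<Sum>k=1..int n. f k + s) = C"
    by (simp add: sum.distrib S_def[symmetric] s_def)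
  then obtain b where b: "affine_perm n b" and window: "\<And>k. k \<in> {1..int n} \<Longrightarrow> b k = f k + s"
    using affine_perm_extend[OF assms(1) f_inj[of s]] C_def by blast
  have "b (i + 1) - b i = \<delta> i" if "1 \<le> i" "i < int n" for i
    using window[of i] window[of "i + 1"] f_step[of i] that by simp
  then show thesis using that b by (simp add: \<delta>_def)
qed

lemma BIAS_exists_steps_cong:
  assumes "n > 0" and inj: "inj_on (\<lambda>j. a j mod int n) {1..int n}"
  obtains b where "b \<in> BIAS n"
    "\<And>i. 1 \<le> i \<Longrightarrow> i < int n \<Longrightarrow> (b (i + 1) - b i) mod int n = (a (i + 1) - a i) mod int n"
proof -
  obtain b where b: "affine_perm n b"
    and b_step: "\<And>i. 1 \<le> i \<Longrightarrow> i < int n \<Longrightarrow> b (i + 1) - b i = (a (i + 1) - a i) mod int n"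
    using affine_perm_exists_steps[OF assms] by blast
  have "1 \<le> b (i + 1) - b i \<and> b (i + 1) - b i \<le> int n - 1" if i: "1 \<le> i" "i < int n" for i
  proof -
    have "(a (i + 1) - a i) mod int n \<noteq> 0"
    proof
      assume "(a (i + 1) - a i) mod int n = 0"
      then have "a (i + 1) mod int n = a i mod int n" by (simp add: mod_eq_0_iff_dvd mod_eq_dvd_iff)
      then show False using inj i by (auto dest: inj_onD)
    qed
    moreover have "0 \<le> (a (i + 1) - a i) mod int n" "(a (i + 1) - a i) mod int n < int n"
      using assms(1) by simp_all
    ultimately show ?thesis using b_step[OF i] by linarith
  qed
  then have "b \<in> BIAS n" using b by (fastforce simp: BIAS_def Scirc_def)
  then show thesis using that b_step by simp
qed

lemma BIAS_eq_if_steps_cong: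
  assumes "n > 0" "b \<in> BIAS n" "b' \<in> BIAS n"
    and "\<And>i. 1 \<le> i \<Longrightarrow> i < int n \<Longrightarrow> (b (i + 1) - b i) mod int n = (b' (i + 1) - b' i) mod int n"
  shows "b = b'"
proof (rule affine_perm_eq_if_steps_eq[OF Scirc_affine_perm[OF BIAS_Scirc[OF assms(2)]]
      Scirc_affine_perm[OF BIAS_Scirc[OF assms(3)]] assms(1)])
  fix i assume i: "1 \<le> i" "i < int n"
  then show "b (i + 1) - b i = b' (i + 1) - b' i"
    using assms(4)[OF i] BIAS_step[OF assms(2) i] BIAS_step[OF assms(3) i] by simp
qed

lemma bias_spec:
  assumes "n > 0" "w \<in> Scirc n"
  shows "bias n w \<in> BIAS n"
    and "\<And>i. 1 \<le> i \<Longrightarrow> i < int n \<Longrightarrow>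
      (bias n w (i + 1) - bias n w i) mod int n = (w (i + 1) - w i) mod int n"
proof -
  let ?P = "\<lambda>b. b \<in> BIAS n \<and> (\<forall>i. 1 \<le> i \<and> i < int n \<longrightarrow>
    (b (i + 1) - b i) mod int n = (w (i + 1) - w i) mod int n)"
  obtain b where b: "b \<in> BIAS n"
    and b_steps: "\<And>i. 1 \<le> i \<Longrightarrow> i < int n \<Longrightarrow> (b (i + 1) - b i) mod int n = (w (i + 1) - w i) mod int n"
    using BIAS_exists_steps_cong[OF assms(1) affine_perm_residues_inj[OF Scirc_affine_perm[OF assms(2)]]]
    by blast
  have "?P b" using b b_steps by blast
  moreover have "b' = b" if "?P b'" for b'
  proof (rule BIAS_eq_if_steps_cong[OF assms(1)])
    show "b' \<in> BIAS n" using that ..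
    show "(b' (i + 1) - b' i) mod int n = (b (i + 1) - b i) mod int n" if "1 \<le> i" "i < int n" for i
      using \<open>?P b'\<close> b_steps[OF that] that by simp
  qed (rule b)
  ultimately have "?P (bias n w)" unfolding bias_def by (rule theI)
  then show "bias n w \<in> BIAS n"
    and "\<And>i. 1 \<le> i \<Longrightarrow> i < int n \<Longrightarrow>
      (bias n w (i + 1) - bias n w i) mod int n = (w (i + 1) - w i) mod int n"
    by simp_all
qed

definition perm_window :: "nat list \<Rightarrow> int \<Rightarrow> int" where
  "perm_window p k = int ((0 # p) ! nat (k - 1))"

lemma Cons_zero_permutations_of_set:
  assumes "p \<in> permutations_of_set {1..<n}" "n > 0"
  shows "distinct (0 # p)" "length (0 # p) = n" "set (0 # p) = {0..<n}"
proof -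
  have p: "set p = {1..<n}" "distinct p" using assms(1) by (simp_all add: permutations_of_set_def)
  then show "distinct (0 # p)" by simp
  show "length (0 # p) = n" using distinct_card[OF p(2)] p(1) assms(2) by simp
  show "set (0 # p) = {0..<n}" using p(1) assms(2) by auto
qed

lemma perm_window_range:
  assumes "p \<in> permutations_of_set {1..<n}" "k \<in> {1..int n}"
  shows "perm_window p k \<in> {0..<int n}"
proof -
  have "n > 0" using assms(2) by simp
  note perm = Cons_zero_permutations_of_set[OF assms(1) this]
  have "nat (k - 1) < length (0 # p)" using assms perm by auto
  then have "(0 # p) ! nat (k - 1) \<in> {0..<n}" using nth_mem perm(3) by blast
  then show ?thesis by (simp add: perm_window_def)
qed

lemma perm_window_residues_inj:
  assumes p: "p \<in> permutations_of_set {1..<n}"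
  shows "inj_on (\<lambda>k. perm_window p k mod int n) {1..int n}"
proof (rule inj_onI)
  fix j k assume jk: "j \<in> {1..int n}" "k \<in> {1..int n}"
    "perm_window p j mod int n = perm_window p k mod int n"
  have "n > 0" using jk(1) by simp
  note perm = Cons_zero_permutations_of_set[OF p this]
  have "perm_window p j = perm_window p k"
    using jk perm_window_range[OF p] by simp
  moreover have "nat (j - 1) < length (0 # p)" "nat (k - 1) < length (0 # p)"
    using jk(1,2) perm by auto
  ultimately have "nat (j - 1) = nat (k - 1)"
    using nth_eq_iff_index_eq[OF perm(1)] jk(1) by (simp add: perm_window_def)
  then show "j = k" using jk(1,2) eq_nat_nat_iff[of "j - 1" "k - 1"] by simp
qed

lemma perm_window_eqD:
  assumes "p \<in> permutations_of_set {1..<n}" "q \<in> permutations_of_set {1..<n}" "n > 0"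
    and "\<And>k. k \<in> {1..int n} \<Longrightarrow> perm_window p k = perm_window q k"
  shows "p = q"
proof -
  have "(0 # p) ! m = (0 # q) ! m" if "m < n" for m
    using assms(4)[of "int m + 1"] that by (simp add: perm_window_def)
  then have "0 # p = 0 # q"
    using Cons_zero_permutations_of_set[OF assms(1,3)] Cons_zero_permutations_of_set[OF assms(2,3)]
    by (intro nth_equalityI) auto
  then show ?thesis by simp
qed

text \<open>Distinct windows give distinct biases since \<open>(b k - b 1) mod n\<close> recovers the \<open>k\<close>-th entry.\<close>
lemma fact_le_card_BIAS:
  assumes "n > 0" "finite (BIAS n)"
  shows "fact (n - 1) \<le> card (BIAS n)"
proof -
  let ?perms = "permutations_of_set {1..<n}"
  have "\<forall>p\<in>?perms. \<exists>b. b \<in> BIAS n \<and> (\<forall>i. 1 \<le> i \<and> i < int n \<longrightarrow>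
      (b (i + 1) - b i) mod int n = (perm_window p (i + 1) - perm_window p i) mod int n)"
  proof
    fix p assume p: "p \<in> ?perms"
    obtain b where "b \<in> BIAS n" "\<And>i. 1 \<le> i \<Longrightarrow> i < int n \<Longrightarrow>
        (b (i + 1) - b i) mod int n = (perm_window p (i + 1) - perm_window p i) mod int n"
      using BIAS_exists_steps_cong[OF assms(1) perm_window_residues_inj[OF p]] by blast
    then show "\<exists>b. b \<in> BIAS n \<and> (\<forall>i. 1 \<le> i \<and> i < int n \<longrightarrow>
        (b (i + 1) - b i) mod int n = (perm_window p (i + 1) - perm_window p i) mod int n)"
      by blast
  qed
  from bchoice[OF this] obtain \<phi> where \<phi>_spec: "\<forall>p\<in>?perms. \<phi> p \<in> BIAS n \<and> (\<forall>i. 1 \<le> i \<and> i < int n \<longrightarrow>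
      (\<phi> p (i + 1) - \<phi> p i) mod int n = (perm_window p (i + 1) - perm_window p i) mod int n)" ..
  then have \<phi>: "\<And>p. p \<in> ?perms \<Longrightarrow> \<phi> p \<in> BIAS n"
    and \<phi>_steps: "\<And>p i. p \<in> ?perms \<Longrightarrow> 1 \<le> i \<Longrightarrow> i < int n \<Longrightarrow>
      (\<phi> p (i + 1) - \<phi> p i) mod int n = (perm_window p (i + 1) - perm_window p i) mod int n"
    by simp_all
  have "inj_on \<phi> ?perms"
  proof (rule inj_onI)
    fix p q assume p: "p \<in> ?perms" and q: "q \<in> ?perms" and eq: "\<phi> p = \<phi> q"
    have one: "1 \<in> {1..int n}" using assms(1) by simp
    show "p = q"
    proof (rule perm_window_eqD[OF p q assms(1)])
      fix k assume k: "k \<in> {1..int n}"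
      have "perm_window p k mod int n = (\<phi> p k - \<phi> p 1) mod int n"
        using cong_diff_if_steps_cong[where f = "\<phi> p" and g = "perm_window p", OF \<phi>_steps[OF p] one k]
        by (simp add: perm_window_def)
      also have "\<dots> = perm_window q k mod int n"
        using cong_diff_if_steps_cong[where f = "\<phi> q" and g = "perm_window q", OF \<phi>_steps[OF q] one k]
        by (simp add: eq perm_window_def)
      finally show "perm_window p k = perm_window q k"
        using perm_window_range[OF p k] perm_window_range[OF q k] by simp
    qed
  qed
  then have "card ?perms \<le> card (BIAS n)" using card_inj_on_le[OF _ _ assms(2)] \<phi> by blast
  then show ?thesis by simp
qed

lemma bij_betw_gapvec_BIAS:
  assumes "n > 0"
  shows "bij_betw (gapvec n) (BIAS n) (lehmer_codes (n - 1))"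
proof -
  have inj: "inj_on (gapvec n) (BIAS n)"
    using BIAS_eq_if_gapvec_eq[OF assms] by (auto intro: inj_onI)
  have sub: "gapvec n ` BIAS n \<subseteq> lehmer_codes (n - 1)"
    using gapvec_BIAS_in_lehmer_codes by blast
  then have "finite (BIAS n)"
    using finite_imageD[OF finite_subset[OF _ finite_lehmer_codes] inj] by blast
  then have "card (lehmer_codes (n - 1)) \<le> card (gapvec n ` BIAS n)"
    using fact_le_card_BIAS[OF assms] card_lehmer_codes card_image[OF inj] by simp
  then have "gapvec n ` BIAS n = lehmer_codes (n - 1)"
    using card_seteq[OF finite_lehmer_codes sub] by blast
  then show ?thesis using inj by (simp add: bij_betw_def)
qed

section \<open>Cones\<close>

lemma mem_cone_iff:
  "v \<in> cone n b \<longleftrightarrow> length v = n - 1 \<and>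
     (\<exists>t. length t = n - 1 \<and> (\<forall>k < n - 1. v ! k = Suc k * t ! k + gapvec n b ! k))"
proof -
  have "v = map (\<lambda>i. i * t ! (i - 1) + gapvec n b ! (i - 1)) [1..<n] \<longleftrightarrow>
      length v = n - 1 \<and> (\<forall>k < n - 1. v ! k = Suc k * t ! k + gapvec n b ! k)" for t
    by (auto simp: list_eq_iff_nth_eq)
  then show ?thesis unfolding cone_def by blast
qed

lemma residue_shift_if_steps_cong:
  fixes w b :: "int \<Rightarrow> int"
  assumes steps: "\<And>i. 1 \<le> i \<Longrightarrow> i < N \<Longrightarrow> (b (i + 1) - b i) mod N = (w (i + 1) - w i) mod N"
    and i: "i \<in> {1..N}"
  shows "x mod N \<in> (\<lambda>j. w j mod N) ` {1..i} \<longleftrightarrow> (x - (w i - b i)) mod N \<in> (\<lambda>j. b j mod N) ` {1..i}"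
proof -
  have "x mod N = w j mod N \<longleftrightarrow> (x - (w i - b i)) mod N = b j mod N" if j: "j \<in> {1..i}" for j
  proof -
    have "(w j - w i) mod N = (b j - b i) mod N"
    proof (rule cong_diff_if_steps_cong[where f = w and g = b])
      show "(w (k + 1) - w k) mod N = (b (k + 1) - b k) mod N" if "1 \<le> k" "k < N" for k
        using steps[OF that] by simp
    qed (use i j in auto)
    then have cong: "N dvd (w j - w i) - (b j - b i)" by (simp add: mod_eq_dvd_iff)
    have eq: "(x - (w i - b i)) - b j = (x - w j) + ((w j - w i) - (b j - b i))" by simp
    have "(x - (w i - b i)) mod N = b j mod N \<longleftrightarrow> N dvd (x - w j) + ((w j - w i) - (b j - b i))"
      unfolding mod_eq_dvd_iff eq ..
    also have "\<dots> \<longleftrightarrow> N dvd x - w j" using cong by (rule dvd_add_left_iff)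
    also have "\<dots> \<longleftrightarrow> x mod N = w j mod N" by (simp add: mod_eq_dvd_iff)
    finally show ?thesis by simp
  qed
  then show ?thesis by (auto simp: image_iff)
qed

text \<open>Writing \<open>w (i + 1) - w i = t n + r\<close> with \<open>r = b (i + 1) - b i\<close>, each of the \<open>t\<close> full periods
  contributes one gap for each of the \<open>i\<close> residues of \<open>w 1, \<dots>, w i\<close>, and the remaining interval
  of length \<open>r\<close> is a translate of the one between \<open>b i\<close> and \<open>b (i + 1)\<close>.\<close>
lemma gapvec_nth_steps_cong:
  assumes w: "w \<in> Scirc n" and b: "b \<in> BIAS n"
    and steps: "\<And>i. 1 \<le> i \<Longrightarrow> i < int n \<Longrightarrow> (b (i + 1) - b i) mod int n = (w (i + 1) - w i) mod int n"
    and i: "1 \<le> i" "i < n"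
  shows "gapvec n w ! (i - 1) = i * nat ((w (int i + 1) - w (int i)) div int n) + gapvec n b ! (i - 1)"
proof -
  let ?i = "int i" and ?N = "int n"
  define r where "r = b (?i + 1) - b ?i"
  define t where "t = nat ((w (?i + 1) - w ?i) div ?N)"
  define Rw where "Rw = (\<lambda>j. w j mod ?N) ` {1..?i}"
  define Rb where "Rb = (\<lambda>j. b j mod ?N) ` {1..?i}"
  have N: "?N > 0" using i by simp
  have r: "1 \<le> r" "r < ?N" using BIAS_step[OF b, of ?i] i by (simp_all add: r_def)
  have "r = (w (?i + 1) - w ?i) mod ?N" using steps[of ?i] r i by (simp add: r_def)
  moreover have "0 \<le> (w (?i + 1) - w ?i) div ?N"
    using Scirc_less[OF w, of ?i "?i + 1"] i by (simp add: pos_imp_zdiv_nonneg_iff)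
  ultimately have w_step: "w (?i + 1) = w ?i + int t * ?N + r"
    using div_mult_mod_eq[of "w (?i + 1) - w ?i" ?N] by (simp add: t_def algebra_simps)
  have "inj_on (\<lambda>j. w j mod ?N) {1..?i}"
    by (rule inj_on_subset[OF affine_perm_residues_inj[OF Scirc_affine_perm[OF w]]]) (use i in auto)
  then have "card Rw = i" by (simp add: Rw_def card_image)
  have "Rw \<subseteq> {0..<?N}" using N by (auto simp: Rw_def)
  have "gapvec n w ! (i - 1) = card {x. w ?i < x \<and> x < w ?i + int t * ?N + r \<and> x mod ?N \<in> Rw}"
    using gapvec_nth_Scirc[OF w i] w_step by (simp add: Rw_def)
  also have "\<dots> = t * i + card {x. w ?i < x \<and> x < w ?i + r \<and> x mod ?N \<in> Rw}"
    using card_residues_in_interval[OF N \<open>Rw \<subseteq> {0..<?N}\<close> r(1)] \<open>card Rw = i\<close> by simp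
  also have "card {x. w ?i < x \<and> x < w ?i + r \<and> x mod ?N \<in> Rw}
      = card {x. w ?i < x + (w ?i - b ?i) \<and> x + (w ?i - b ?i) < w ?i + r \<and> (x + (w ?i - b ?i)) mod ?N \<in> Rw}"
    by (rule card_Collect_shift)
  also have "\<dots> = card {x. b ?i < x \<and> x < b (?i + 1) \<and> x mod ?N \<in> Rb}"
    using residue_shift_if_steps_cong[where w = w and b = b, OF steps, of ?i] i
    by (simp add: Rw_def Rb_def r_def)
  also have "\<dots> = gapvec n b ! (i - 1)"
    using gapvec_nth_Scirc[OF BIAS_Scirc[OF b] i] by (simp add: Rb_def)
  finally show ?thesis by (simp add: t_def)
qed

lemma gapvec_in_cone_bias:
  assumes "n > 0" "w \<in> Scirc n"
  shows "gapvec n w \<in> cone n (bias n w)"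
  unfolding mem_cone_iff
proof (intro conjI exI)
  let ?t = "map (\<lambda>i. nat ((w (int i + 1) - w (int i)) div int n)) [1..<n]"
  show "length (gapvec n w) = n - 1" "length ?t = n - 1" by (simp_all add: length_gapvec)
  show "\<forall>k < n - 1. gapvec n w ! k = Suc k * ?t ! k + gapvec n (bias n w) ! k"
  proof (intro allI impI)
    fix k assume "k < n - 1"
    then have "1 \<le> Suc k" "Suc k < n" "[1..<n] ! k = Suc k" by simp_all
    from gapvec_nth_steps_cong[OF assms(2) bias_spec[OF assms] this(1,2)] this(2,3)
    show "gapvec n w ! k = Suc k * ?t ! k + gapvec n (bias n w) ! k" by simp
  qed
qed

lemma mem_cone_BIAS_iff:
  assumes "b \<in> BIAS n"
  shows "v \<in> cone n b \<longleftrightarrow> length v = n - 1 \<and> gapvec n b = map (\<lambda>k. v ! k mod Suc k) [0..<n - 1]"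
proof -
  have small: "gapvec n b ! k < Suc k" if "k < n - 1" for k
    using gapvec_nth_BIAS_less[OF assms, of "Suc k"] that by simp
  show ?thesis
  proof
    assume "v \<in> cone n b"
    then obtain t where len: "length v = n - 1"
      and v: "\<And>k. k < n - 1 \<Longrightarrow> v ! k = Suc k * t ! k + gapvec n b ! k"
      unfolding mem_cone_iff by blast
    have "v ! k mod Suc k = gapvec n b ! k" if "k < n - 1" for k
    proof -
      have "v ! k = gapvec n b ! k + t ! k * Suc k" using v[OF that] by simp
      then show ?thesis using small[OF that] by (simp only: mod_mult_self1 mod_less)
    qed
    then show "length v = n - 1 \<and> gapvec n b = map (\<lambda>k. v ! k mod Suc k) [0..<n - 1]"
      using len by (simp add: list_eq_iff_nth_eq length_gapvec)
  next
    assume v: "length v = n - 1 \<and> gapvec n b = map (\<lambda>k. v ! k mod Suc k) [0..<n - 1]"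
    let ?t = "map (\<lambda>k. v ! k div Suc k) [0..<n - 1]"
    have "v ! k = Suc k * ?t ! k + gapvec n b ! k" if "k < n - 1" for k
    proof -
      have "v ! k = Suc k * (v ! k div Suc k) + v ! k mod Suc k"
        by (simp only: mult.commute[of "Suc k"] div_mult_mod_eq)
      then show ?thesis using v that by simp
    qed
    then show "v \<in> cone n b" unfolding mem_cone_iff using v by (intro conjI exI[of _ ?t]) auto
  qed
qed

theorem mainTheorem4:
  fixes n :: nat
  assumes "n \<ge> 2"
  shows "(\<forall>b \<in> BIAS n. cone n b \<subseteq> {v. length v = n - 1})
       \<and> (\<forall>v. length v = n - 1 \<longrightarrow> (\<exists>!b. b \<in> BIAS n \<and> v \<in> cone n b))
       \<and> (\<forall>w \<in> Scirc n. gapvec n w \<in> cone n (bias n w))"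
proof -
  have n: "n > 0" using assms by simp
  have partition: "\<exists>!b. b \<in> BIAS n \<and> v \<in> cone n b" if v: "length v = n - 1" for v
  proof -
    let ?c = "map (\<lambda>k. v ! k mod Suc k) [0..<n - 1]"
    have "?c \<in> lehmer_codes (n - 1)" by (simp add: lehmer_codes_def less_Suc_eq_le)
    then have "?c \<in> gapvec n ` BIAS n" using bij_betw_gapvec_BIAS[OF n] by (simp add: bij_betw_def)
    then obtain b where b: "b \<in> BIAS n" "gapvec n b = ?c" by (auto simp del: map_eq_conv)
    show ?thesis
    proof (rule ex1I[of _ b])
      show "b \<in> BIAS n \<and> v \<in> cone n b" using b v mem_cone_BIAS_iff[OF b(1)] by simp
      fix b' assume b': "b' \<in> BIAS n \<and> v \<in> cone n b'"
      then have "gapvec n b' = gapvec n b" using b(2) mem_cone_BIAS_iff[of b' n v] by simp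
      then show "b' = b" using BIAS_eq_if_gapvec_eq[OF n] b(1) b' by simp
    qed
  qed
  show ?thesis
  proof (intro conjI ballI allI impI)
    show "cone n b \<subseteq> {v. length v = n - 1}" for b by (auto simp: mem_cone_iff)
    show "\<exists>!b. b \<in> BIAS n \<and> v \<in> cone n b" if "length v = n - 1" for v using partition[OF that] .
    show "gapvec n w \<in> cone n (bias n w)" if "w \<in> Scirc n" for w using gapvec_in_cone_bias[OF n that] .
  qed
qed

end
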